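(* For all $\mathbf u\in D(\tilde{\mathbf L})$ we have $\operatorname{Re}(\tilde{\mathbf L}\mathbf u,\mathbf u)_{\tilde{\mathcal H}}\le0$.
   Context: Radial functions on $\mathbb B^6_1=\{x\in\mathbb R^6:|x|<1\}$ are identified with their profiles in $\rho=|x|$, and $'$ denotes $\partial_\rho$. $D(\tilde{\mathbf L})=\{\mathbf u=(u_1,u_2)\in C^3(\overline{\mathbb B^6_1})\times C^2(\overline{\mathbb B^6_1}): u_1,u_2\text{ radial}\}$ and \[\tilde{\mathbf L}\mathbf u(\rho)=\begin{pmatrix}-\rho u_1'(\rho)-u_1(\rho)+u_2(\rho)\\ u_1''(\rho)+\frac5\rho u_1'(\rho)-\rho u_2'(\rho)-2u_2(\rho)\end{pmatrix}.\] On $D(\tilde{\mathbf L})$, \[(\mathbf u,\mathbf v)_{\tilde{\mathcal H}}=2\int_0^1u_1''\overline{v_1''}\rho^5d\rho+10\int_0^1u_1'\overline{v_1'}\rho^3d\rho+2\int_0^1u_2'\overline{v_2'}\rho^5d\rho+u_1(1)\overline{v_1(1)}+u_2(1)\overline{v_2(1)}.\] *)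

theory Defs
  imports "HOL-Analysis.Analysis"
begin

text \<open>k-times continuously differentiable on a (closed) set S, derivatives taken
  within S (so that one-sided derivatives up to the boundary are used).\<close>
primrec Ck_on :: "nat \<Rightarrow> ('a::euclidean_space) set \<Rightarrow> ('a \<Rightarrow> complex) \<Rightarrow> bool" where
  "Ck_on 0 S f = continuous_on S f"
| "Ck_on (Suc k) S f =
     (\<exists>D. (\<forall>x\<in>S. (f has_derivative (\<lambda>h. \<Sum>i\<in>Basis. (h \<bullet> i) *\<^sub>R D i x)) (at x within S))
          \<and> (\<forall>i\<in>Basis. Ck_on k S (D i)))"

definition radial_on :: "('a::real_normed_vector) set \<Rightarrow> ('a \<Rightarrow> 'b) \<Rightarrow> bool" where
  "radial_on S u \<longleftrightarrow> (\<forall>x\<in>S. \<forall>y\<in>S. norm x = norm y \<longrightarrow> u x = u y)"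

abbreviation ball6 :: "(real^6) set" where "ball6 \<equiv> cball 0 1"

definition profile :: "(real^6 \<Rightarrow> complex) \<Rightarrow> real \<Rightarrow> complex" where
  "profile u \<rho> = u (\<rho> *\<^sub>R axis 1 1)"

definition dr :: "(real \<Rightarrow> complex) \<Rightarrow> real \<Rightarrow> complex" where
  "dr f \<rho> = vector_derivative f (at \<rho> within {0..1})"

definition D_Ltilde :: "((real^6 \<Rightarrow> complex) \<times> (real^6 \<Rightarrow> complex)) set" where
  "D_Ltilde = {(u1, u2). Ck_on 3 ball6 u1 \<and> Ck_on 2 ball6 u2 \<and> radial_on ball6 u1 \<and> radial_on ball6 u2}"

definition Ltilde :: "(real \<Rightarrow> complex) \<times> (real \<Rightarrow> complex) \<Rightarrow> (real \<Rightarrow> complex) \<times> (real \<Rightarrow> complex)" where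
  "Ltilde u = (let u1 = fst u; u2 = snd u in
     ((\<lambda>\<rho>. - (of_real \<rho>) * dr u1 \<rho> - u1 \<rho> + u2 \<rho>),
      (\<lambda>\<rho>. dr (dr u1) \<rho> + of_real (5 / \<rho>) * dr u1 \<rho> - of_real \<rho> * dr u2 \<rho> - 2 * u2 \<rho>)))"

definition ipH :: "(real \<Rightarrow> complex) \<times> (real \<Rightarrow> complex) \<Rightarrow> (real \<Rightarrow> complex) \<times> (real \<Rightarrow> complex) \<Rightarrow> complex" where
  "ipH u v =
     2 * integral {0..1} (\<lambda>\<rho>. dr (dr (fst u)) \<rho> * cnj (dr (dr (fst v)) \<rho>) * of_real (\<rho> ^ 5))
   + 10 * integral {0..1} (\<lambda>\<rho>. dr (fst u) \<rho> * cnj (dr (fst v) \<rho>) * of_real (\<rho> ^ 3))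
   + 2 * integral {0..1} (\<lambda>\<rho>. dr (snd u) \<rho> * cnj (dr (snd v) \<rho>) * of_real (\<rho> ^ 5))
   + fst u 1 * cnj (fst v 1) + snd u 1 * cnj (snd v 1)"

end

theory Submission
  imports Defs
begin

text \<open>Write \<open>w\<close>, \<open>v\<close> for the profiles of \<open>u\<^sub>1\<close>, \<open>u\<^sub>2\<close>. The real part of the combined
  integrand of the three weighted integrals in \<open>(L u, u)\<close> is the exact derivative of
  \<open>E = - \<rho>\<^sup>6 |w''|\<^sup>2 - 5 \<rho>\<^sup>4 |w'|\<^sup>2 - \<rho>\<^sup>6 |v'|\<^sup>2 + 2 \<rho>\<^sup>5 Re (w'' cnj v')\<close>, which vanishes at
  \<open>\<rho> = 0\<close>; the weight \<open>\<rho>\<^sup>5\<close> absorbs the singular coefficient \<open>5 / \<rho>\<close>. Hence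
  \<open>Re (L u, u)\<close> is a quadratic form in the boundary values \<open>w''(1), w'(1), v'(1), w(1), v(1)\<close>,
  and completing squares shows that this form is negative definite.\<close>

lemma Ck_on_imp_continuous_on: "Ck_on k S f \<Longrightarrow> continuous_on S f"
  by (cases k) (auto intro: has_derivative_continuous_on)

lemma continuous_on_profile:
  assumes "Ck_on k ball6 g"
  shows "continuous_on {0..1} (profile g)"
proof -
  have "continuous_on {0..1} (\<lambda>\<rho>::real. \<rho> *\<^sub>R (axis 1 1 :: real^6))"
    by (intro continuous_intros)
  moreover have "(\<lambda>\<rho>::real. \<rho> *\<^sub>R (axis 1 1 :: real^6)) ` {0..1} \<subseteq> ball6"
    by (auto simp: norm_Basis)
  ultimately show ?thesis
    unfolding profile_def
    using continuous_on_compose2[OF Ck_on_imp_continuous_on[OF assms]] by blast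
qed

lemma profile_has_vector_derivative:
  assumes "Ck_on (Suc k) ball6 f"
  obtains g where "Ck_on k ball6 g"
    and "\<And>\<rho>. \<rho> \<in> {0..1} \<Longrightarrow> (profile f has_vector_derivative profile g \<rho>) (at \<rho> within {0..1})"
proof -
  obtain D where D: "\<And>x. x \<in> ball6 \<Longrightarrow>
      (f has_derivative (\<lambda>h. \<Sum>i\<in>Basis. (h \<bullet> i) *\<^sub>R D i x)) (at x within ball6)"
    and Ck_D: "\<And>i. i \<in> Basis \<Longrightarrow> Ck_on k ball6 (D i)"
    using assms unfolding Ck_on.simps by blast
  define e :: "real^6" where "e = axis 1 1"
  have e: "e \<in> Basis"
    by (simp add: e_def)
  define p where "p = (\<lambda>\<rho>::real. \<rho> *\<^sub>R e)"
  have segment: "p ` {0..1} \<subseteq> ball6"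
    using e by (auto simp: p_def)
  have "(profile f has_vector_derivative profile (D e) \<rho>) (at \<rho> within {0..1})"
    if \<rho>: "\<rho> \<in> {0..1}" for \<rho>
  proof -
    have "(p has_vector_derivative e) (at \<rho> within {0..1})"
      unfolding p_def by (auto intro!: derivative_eq_intros)
    moreover have "(f has_derivative (\<lambda>h. \<Sum>i\<in>Basis. (h \<bullet> i) *\<^sub>R D i (p \<rho>)))
        (at (p \<rho>) within p ` {0..1})"
      using D[of "p \<rho>"] has_derivative_subset segment \<rho> by blast
    ultimately have "(f \<circ> p has_vector_derivative (\<Sum>i\<in>Basis. (e \<bullet> i) *\<^sub>R D i (p \<rho>)))
        (at \<rho> within {0..1})"
      by (rule vector_derivative_diff_chain_within)
    moreover have "(\<Sum>i\<in>Basis. (e \<bullet> i) *\<^sub>R D i (p \<rho>)) = D e (p \<rho>)"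
      by (subst sum.remove[OF _ e]) (auto simp: inner_Basis e intro!: sum.neutral split: if_splits)
    ultimately show ?thesis
      by (simp add: profile_def[abs_def] p_def e_def comp_def)
  qed
  with Ck_D e show thesis
    using that by blast
qed

lemma dr_eqI:
  assumes "(f has_vector_derivative f') (at x within {0..1})" and "x \<in> {0..1}"
  shows "dr f x = f'"
  using assms vector_derivative_within_cbox[of 0 1 x f f'] by (simp add: dr_def cbox_interval)

lemma dr_dr_eqI:
  assumes "\<And>y. y \<in> {0..1} \<Longrightarrow> (f has_vector_derivative f' y) (at y within {0..1})"
    and "(f' has_vector_derivative f'') (at x within {0..1})" and "x \<in> {0..1}"
  shows "dr (dr f) x = f''"
proof -
  have "(dr f has_vector_derivative f'') (at x within {0..1})"
    using assms dr_eqI by (blast intro: has_vector_derivative_transform)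
  then show ?thesis
    using assms(3) by (rule dr_eqI)
qed

lemma boundary_form_nonpos_real:
  fixes a b c d e :: real
  shows "- a\<^sup>2 - 5 * b\<^sup>2 - c\<^sup>2 + 2 * a * c - b * d - d\<^sup>2 + e * d + a * e + 5 * b * e - c * e
    - 2 * e\<^sup>2 \<le> 0"
proof -
  have "- a\<^sup>2 - 5 * b\<^sup>2 - c\<^sup>2 + 2 * a * c - b * d - d\<^sup>2 + e * d + a * e + 5 * b * e - c * e
      - 2 * e\<^sup>2
    = - (a - c - e / 2)\<^sup>2 - 5 * (b + d / 10 - e / 2)\<^sup>2 - 19 / 20 * (d - 5 * e / 19)\<^sup>2
      - 33 / 76 * e\<^sup>2"
    by (simp add: power2_eq_square algebra_simps)
  also have "\<dots> \<le> 0"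
    using zero_le_power2[of "a - c - e / 2"] zero_le_power2[of "b + d / 10 - e / 2"]
      zero_le_power2[of "d - 5 * e / 19"] zero_le_power2[of e]
    by linarith
  finally show ?thesis .
qed

lemma boundary_form_nonpos:
  fixes a b c d e :: complex
  shows "Re (- (a * cnj a) - 5 * (b * cnj b) - c * cnj c + 2 * (a * cnj c))
    + Re ((- b - d + e) * cnj d) + Re ((a + 5 * b - c - 2 * e) * cnj e) \<le> 0"
  using boundary_form_nonpos_real[of "Re a" "Re b" "Re c" "Re d" "Re e"]
    boundary_form_nonpos_real[of "Im a" "Im b" "Im c" "Im d" "Im e"]
  by (simp add: power2_eq_square algebra_simps)

locale C3_C2_profiles =
  fixes w w' w'' w''' v v' v'' :: "real \<Rightarrow> complex"
  assumes w_deriv: "\<And>x. x \<in> {0..1} \<Longrightarrow> (w has_vector_derivative w' x) (at x within {0..1})"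
    and w'_deriv: "\<And>x. x \<in> {0..1} \<Longrightarrow> (w' has_vector_derivative w'' x) (at x within {0..1})"
    and w''_deriv: "\<And>x. x \<in> {0..1} \<Longrightarrow> (w'' has_vector_derivative w''' x) (at x within {0..1})"
    and continuous_w''': "continuous_on {0..1} w'''"
    and v_deriv: "\<And>x. x \<in> {0..1} \<Longrightarrow> (v has_vector_derivative v' x) (at x within {0..1})"
    and v'_deriv: "\<And>x. x \<in> {0..1} \<Longrightarrow> (v' has_vector_derivative v'' x) (at x within {0..1})"
    and continuous_v'': "continuous_on {0..1} v''"
begin

abbreviation "Ltilde1 \<equiv> fst (Ltilde (w, v))"
abbreviation "Ltilde2 \<equiv> snd (Ltilde (w, v))"

lemmas continuous_profiles =
  continuous_on_vector_derivative[OF w_deriv] continuous_on_vector_derivative[OF w'_deriv]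
  continuous_on_vector_derivative[OF w''_deriv] continuous_on_vector_derivative[OF v_deriv]
  continuous_on_vector_derivative[OF v'_deriv] continuous_w''' continuous_v''

lemma dr_w: "x \<in> {0..1} \<Longrightarrow> dr w x = w' x"
  using dr_eqI w_deriv by blast

lemma dr_dr_w: "x \<in> {0..1} \<Longrightarrow> dr (dr w) x = w'' x"
  using dr_dr_eqI w_deriv w'_deriv by blast

lemma dr_v: "x \<in> {0..1} \<Longrightarrow> dr v x = v' x"
  using dr_eqI v_deriv by blast

lemma Ltilde1_eq: "x \<in> {0..1} \<Longrightarrow> Ltilde1 x = - of_real x * w' x - w x + v x"
  by (simp add: Ltilde_def dr_w)

lemma Ltilde2_eq:
  "x \<in> {0..1} \<Longrightarrow> Ltilde2 x = w'' x + of_real (5 / x) * w' x - of_real x * v' x - 2 * v x"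
  by (simp add: Ltilde_def dr_w dr_dr_w dr_v)

lemma Ltilde1_has_vector_derivative:
  assumes "x \<in> {0..1}"
  shows "(Ltilde1 has_vector_derivative - 2 * w' x - of_real x * w'' x + v' x) (at x within {0..1})"
proof (rule has_vector_derivative_transform[OF assms Ltilde1_eq])
  show "((\<lambda>x. - of_real x * w' x - w x + v x) has_vector_derivative
      - 2 * w' x - of_real x * w'' x + v' x) (at x within {0..1})"
    by (rule derivative_eq_intros w_deriv w'_deriv v_deriv assms refl)+
       (simp add: algebra_simps)
qed

lemma dr_Ltilde1: "x \<in> {0..1} \<Longrightarrow> dr Ltilde1 x = - 2 * w' x - of_real x * w'' x + v' x"
  by (rule dr_eqI[OF Ltilde1_has_vector_derivative])

lemma dr_dr_Ltilde1:
  assumes "x \<in> {0..1}"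
  shows "dr (dr Ltilde1) x = - 3 * w'' x - of_real x * w''' x + v'' x"
proof (rule dr_dr_eqI[OF Ltilde1_has_vector_derivative _ assms])
  show "((\<lambda>x. - 2 * w' x - of_real x * w'' x + v' x) has_vector_derivative
      - 3 * w'' x - of_real x * w''' x + v'' x) (at x within {0..1})"
    by (rule derivative_eq_intros w'_deriv w''_deriv v'_deriv assms refl)+
       (simp add: algebra_simps)
qed

lemma dr_Ltilde2:
  assumes "x \<in> {0<..1}"
  shows "dr Ltilde2 x = w''' x + of_real (5 / x) * w'' x - of_real (5 / x\<^sup>2) * w' x
    - 3 * v' x - of_real x * v'' x"
proof (rule dr_eqI)
  have x: "x \<in> {0..1}" "x \<noteq> 0"
    using assms by auto
  have "((\<lambda>x. w'' x + of_real (5 / x) * w' x - of_real x * v' x - 2 * v x) has_vector_derivative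
      w''' x + of_real (5 / x) * w'' x - of_real (5 / x\<^sup>2) * w' x - 3 * v' x - of_real x * v'' x)
      (at x within {0..1})"
    by (rule derivative_eq_intros w_deriv w'_deriv w''_deriv v_deriv v'_deriv x refl)+
       (simp add: algebra_simps power2_eq_square divide_simps x)
  then show "(Ltilde2 has_vector_derivative w''' x + of_real (5 / x) * w'' x
      - of_real (5 / x\<^sup>2) * w' x - 3 * v' x - of_real x * v'' x) (at x within {0..1})"
    by (rule has_vector_derivative_transform[OF x(1) Ltilde2_eq, rotated])
  show "x \<in> {0..1}"
    using x by simp
qed

text \<open>Multiplying by the weight \<open>\<rho>\<^sup>5\<close> removes the singularity, and both sides are \<open>0\<close> at \<open>\<rho> = 0\<close>.\<close>
lemma dr_Ltilde2_weighted:
  assumes "x \<in> {0..1}"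
  shows "dr Ltilde2 x * of_real (x ^ 5) = of_real (x ^ 5) * w''' x + 5 * of_real (x ^ 4) * w'' x
    - 5 * of_real (x ^ 3) * w' x - 3 * of_real (x ^ 5) * v' x - of_real (x ^ 6) * v'' x"
proof (cases "x = 0")
  case False
  with assms show ?thesis
    by (simp add: dr_Ltilde2 field_simps power2_eq_square eval_nat_numeral)
qed simp

lemma dr_Ltilde2_integrand:
  assumes "x \<in> {0..1}"
  shows "dr Ltilde2 x * cnj (dr v x) * of_real (x ^ 5) = (of_real (x ^ 5) * w''' x
    + 5 * of_real (x ^ 4) * w'' x - 5 * of_real (x ^ 3) * w' x - 3 * of_real (x ^ 5) * v' x
    - of_real (x ^ 6) * v'' x) * cnj (v' x)"
proof -
  have "dr Ltilde2 x * cnj (dr v x) * of_real (x ^ 5) = dr Ltilde2 x * of_real (x ^ 5) * cnj (v' x)"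
    using assms by (simp add: dr_v mult_ac)
  then show ?thesis
    by (simp only: dr_Ltilde2_weighted[OF assms])
qed

lemma continuous_on_ipH_integrands:
  "continuous_on {0..1} (\<lambda>\<rho>. dr (dr Ltilde1) \<rho> * cnj (dr (dr w) \<rho>) * of_real (\<rho> ^ 5))"
  "continuous_on {0..1} (\<lambda>\<rho>. dr Ltilde1 \<rho> * cnj (dr w \<rho>) * of_real (\<rho> ^ 3))"
  "continuous_on {0..1} (\<lambda>\<rho>. dr Ltilde2 \<rho> * cnj (dr v \<rho>) * of_real (\<rho> ^ 5))"
proof -
  have "continuous_on {0..1}
      (\<lambda>\<rho>. (- 3 * w'' \<rho> - of_real \<rho> * w''' \<rho> + v'' \<rho>) * cnj (w'' \<rho>) * of_real (\<rho> ^ 5))"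
    by (intro continuous_intros continuous_profiles)
  then show "continuous_on {0..1} (\<lambda>\<rho>. dr (dr Ltilde1) \<rho> * cnj (dr (dr w) \<rho>) * of_real (\<rho> ^ 5))"
    by (rule continuous_on_eq) (simp add: dr_dr_Ltilde1 dr_dr_w)
  have "continuous_on {0..1}
      (\<lambda>\<rho>. (- 2 * w' \<rho> - of_real \<rho> * w'' \<rho> + v' \<rho>) * cnj (w' \<rho>) * of_real (\<rho> ^ 3))"
    by (intro continuous_intros continuous_profiles)
  then show "continuous_on {0..1} (\<lambda>\<rho>. dr Ltilde1 \<rho> * cnj (dr w \<rho>) * of_real (\<rho> ^ 3))"
    by (rule continuous_on_eq) (simp add: dr_Ltilde1 dr_w)
  have "continuous_on {0..1} (\<lambda>\<rho>. (of_real (\<rho> ^ 5) * w''' \<rho> + 5 * of_real (\<rho> ^ 4) * w'' \<rho>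
      - 5 * of_real (\<rho> ^ 3) * w' \<rho> - 3 * of_real (\<rho> ^ 5) * v' \<rho> - of_real (\<rho> ^ 6) * v'' \<rho>)
      * cnj (v' \<rho>))"
    by (intro continuous_intros continuous_profiles)
  then show "continuous_on {0..1} (\<lambda>\<rho>. dr Ltilde2 \<rho> * cnj (dr v \<rho>) * of_real (\<rho> ^ 5))"
    by (rule continuous_on_eq) (simp only: dr_Ltilde2_integrand)
qed

definition energy :: "real \<Rightarrow> complex" where
  "energy \<rho> = - of_real (\<rho> ^ 6) * (w'' \<rho> * cnj (w'' \<rho>)) - 5 * of_real (\<rho> ^ 4) * (w' \<rho> * cnj (w' \<rho>))
    - of_real (\<rho> ^ 6) * (v' \<rho> * cnj (v' \<rho>)) + 2 * of_real (\<rho> ^ 5) * (w'' \<rho> * cnj (v' \<rho>))"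

lemma Re_energy_has_vector_derivative:
  assumes x: "x \<in> {0..1}"
  shows "((\<lambda>\<rho>. Re (energy \<rho>)) has_vector_derivative
    Re (2 * (dr (dr Ltilde1) x * cnj (dr (dr w) x) * of_real (x ^ 5))
      + 10 * (dr Ltilde1 x * cnj (dr w x) * of_real (x ^ 3))
      + 2 * (dr Ltilde2 x * cnj (dr v x) * of_real (x ^ 5)))) (at x within {0..1})"
proof -
  define energy' where "energy' =
      - (of_real (6 * x ^ 5) * (w'' x * cnj (w'' x))
        + of_real (x ^ 6) * (w''' x * cnj (w'' x) + w'' x * cnj (w''' x)))
      - 5 * (of_real (4 * x ^ 3) * (w' x * cnj (w' x))
        + of_real (x ^ 4) * (w'' x * cnj (w' x) + w' x * cnj (w'' x)))
      - (of_real (6 * x ^ 5) * (v' x * cnj (v' x))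
        + of_real (x ^ 6) * (v'' x * cnj (v' x) + v' x * cnj (v'' x)))
      + 2 * (of_real (5 * x ^ 4) * (w'' x * cnj (v' x))
        + of_real (x ^ 5) * (w''' x * cnj (v' x) + w'' x * cnj (v'' x)))"
  have "(energy has_vector_derivative energy') (at x within {0..1})"
    unfolding energy_def[abs_def] energy'_def
    by (rule derivative_eq_intros w'_deriv w''_deriv v'_deriv x refl)+
       (simp add: algebra_simps)
  moreover have "Re (2 * (dr (dr Ltilde1) x * cnj (dr (dr w) x) * of_real (x ^ 5))
      + 10 * (dr Ltilde1 x * cnj (dr w x) * of_real (x ^ 3))
      + 2 * (dr Ltilde2 x * cnj (dr v x) * of_real (x ^ 5))) = Re energy'"
    unfolding dr_Ltilde2_integrand[OF x] dr_dr_Ltilde1[OF x] dr_dr_w[OF x] dr_Ltilde1[OF x]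
      dr_w[OF x] energy'_def
    by (simp add: algebra_simps) (simp add: eval_nat_numeral algebra_simps)
  ultimately show ?thesis
    using bounded_linear.has_vector_derivative[OF bounded_linear_Re] by (simp add: o_def)
qed

lemma Re_ipH_integrals_eq_energy:
  "Re (2 * integral {0..1} (\<lambda>\<rho>. dr (dr Ltilde1) \<rho> * cnj (dr (dr w) \<rho>) * of_real (\<rho> ^ 5))
    + 10 * integral {0..1} (\<lambda>\<rho>. dr Ltilde1 \<rho> * cnj (dr w \<rho>) * of_real (\<rho> ^ 3))
    + 2 * integral {0..1} (\<lambda>\<rho>. dr Ltilde2 \<rho> * cnj (dr v \<rho>) * of_real (\<rho> ^ 5)))
  = Re (energy 1)" (is "Re ?integrals = _")
proof -
  have "((\<lambda>\<rho>. 2 * (dr (dr Ltilde1) \<rho> * cnj (dr (dr w) \<rho>) * of_real (\<rho> ^ 5))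
      + 10 * (dr Ltilde1 \<rho> * cnj (dr w \<rho>) * of_real (\<rho> ^ 3))
      + 2 * (dr Ltilde2 \<rho> * cnj (dr v \<rho>) * of_real (\<rho> ^ 5))) has_integral ?integrals) {0..1}"
    by (intro has_integral_add has_integral_mult_right integrable_integral
        integrable_continuous_interval continuous_on_ipH_integrands)
  from has_integral_linear[OF this bounded_linear_Re]
  have "((\<lambda>\<rho>. Re (2 * (dr (dr Ltilde1) \<rho> * cnj (dr (dr w) \<rho>) * of_real (\<rho> ^ 5))
      + 10 * (dr Ltilde1 \<rho> * cnj (dr w \<rho>) * of_real (\<rho> ^ 3))
      + 2 * (dr Ltilde2 \<rho> * cnj (dr v \<rho>) * of_real (\<rho> ^ 5)))) has_integral Re ?integrals) {0..1}"
    by (simp add: o_def)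
  moreover have "((\<lambda>\<rho>. Re (2 * (dr (dr Ltilde1) \<rho> * cnj (dr (dr w) \<rho>) * of_real (\<rho> ^ 5))
      + 10 * (dr Ltilde1 \<rho> * cnj (dr w \<rho>) * of_real (\<rho> ^ 3))
      + 2 * (dr Ltilde2 \<rho> * cnj (dr v \<rho>) * of_real (\<rho> ^ 5))))
      has_integral Re (energy 1) - Re (energy 0)) {0..1}"
    by (intro fundamental_theorem_of_calculus zero_le_one Re_energy_has_vector_derivative)
  ultimately show ?thesis
    by (simp add: has_integral_unique energy_def)
qed

lemma Re_ipH_Ltilde_nonpos: "Re (ipH (Ltilde (w, v)) (w, v)) \<le> 0"
proof -
  have "Re (ipH (Ltilde (w, v)) (w, v))
      = Re (energy 1) + Re (Ltilde1 1 * cnj (w 1)) + Re (Ltilde2 1 * cnj (v 1))"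
    using Re_ipH_integrals_eq_energy by (simp add: ipH_def)
  also have "\<dots> = Re (- (w'' 1 * cnj (w'' 1)) - 5 * (w' 1 * cnj (w' 1)) - v' 1 * cnj (v' 1)
      + 2 * (w'' 1 * cnj (v' 1))) + Re ((- w' 1 - w 1 + v 1) * cnj (w 1))
      + Re ((w'' 1 + 5 * w' 1 - v' 1 - 2 * v 1) * cnj (v 1))"
    by (simp add: Ltilde1_eq Ltilde2_eq energy_def)
  also have "\<dots> \<le> 0"
    by (rule boundary_form_nonpos)
  finally show ?thesis .
qed

end

theorem mainTheorem7:
  fixes u1 u2 :: "real^6 \<Rightarrow> complex"
  assumes "(u1, u2) \<in> D_Ltilde"
  shows "Re (ipH (Ltilde (profile u1, profile u2)) (profile u1, profile u2)) \<le> 0"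
proof -
  have "Ck_on (Suc (Suc (Suc 0))) ball6 u1" and "Ck_on (Suc (Suc 0)) ball6 u2"
    using assms by (auto simp: D_Ltilde_def numeral_eq_Suc)
  then obtain g1 g2 g3 k1 k2
    where "Ck_on 0 ball6 g3" "Ck_on 0 ball6 k2"
      and "\<And>\<rho>. \<rho> \<in> {0..1} \<Longrightarrow> (profile u1 has_vector_derivative profile g1 \<rho>) (at \<rho> within {0..1})"
      and "\<And>\<rho>. \<rho> \<in> {0..1} \<Longrightarrow> (profile g1 has_vector_derivative profile g2 \<rho>) (at \<rho> within {0..1})"
      and "\<And>\<rho>. \<rho> \<in> {0..1} \<Longrightarrow> (profile g2 has_vector_derivative profile g3 \<rho>) (at \<rho> within {0..1})"
      and "\<And>\<rho>. \<rho> \<in> {0..1} \<Longrightarrow> (profile u2 has_vector_derivative profile k1 \<rho>) (at \<rho> within {0..1})"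
      and "\<And>\<rho>. \<rho> \<in> {0..1} \<Longrightarrow> (profile k1 has_vector_derivative profile k2 \<rho>) (at \<rho> within {0..1})"
    by (metis profile_has_vector_derivative)
  then interpret C3_C2_profiles "profile u1" "profile g1" "profile g2" "profile g3"
      "profile u2" "profile k1" "profile k2"
    by unfold_locales (auto simp del: Ck_on.simps intro: continuous_on_profile)
  show ?thesis
    by (rule Re_ipH_Ltilde_nonpos)
qed

end
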